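(* Let $R\subseteq\mathbb{C}$ be a discrete subset (i.e. without accumulation points in $\mathbb{C}$). Then for each $n\in\mathbb{N}$ there are only finitely many frieze patterns over $R\setminus\{0\}$ of height $n$.
   Context: A frieze pattern of height $n$ over $S\subseteq\mathbb{C}$ is a family $(c_{i,j})_{i\in\mathbb{Z},\ i\le j\le i+n+3}$ of complex numbers such that: - $c_{i,i}=c_{i,i+n+3}=0$ and $c_{i,i+1}=c_{i,i+n+2}=1$; - $c_{i,j}\in S$ for $i+2\le j\le i+n+1$; - every adjacent $2\times2$ determinant $c_{i,j}c_{i+1,j+1}-c_{i,j+1}c_{i+1,j}$ (all entries defined) equals $1$. *)

theory Defs
  imports "HOL-Analysis.Analysis"
begin

definition frieze_dom :: "nat \<Rightarrow> (int \<times> int) set" where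
  "frieze_dom n = {(i, j). i \<le> j \<and> j \<le> i + int n + 3}"

definition frieze_pattern :: "nat \<Rightarrow> complex set \<Rightarrow> (int \<times> int \<Rightarrow> complex) \<Rightarrow> bool" where
  "frieze_pattern n S c \<longleftrightarrow>
     c \<in> extensional (frieze_dom n) \<and>
     (\<forall>i. c (i, i) = 0 \<and> c (i, i + int n + 3) = 0 \<and>
          c (i, i + 1) = 1 \<and> c (i, i + int n + 2) = 1) \<and>
     (\<forall>i j. i + 2 \<le> j \<and> j \<le> i + int n + 1 \<longrightarrow> c (i, j) \<in> S) \<and>
     (\<forall>i j. i + 1 \<le> j \<and> j \<le> i + int n + 2 \<longrightarrow>
          c (i, j) * c (i + 1, j + 1) - c (i, j + 1) * c (i + 1, j) = 1)"

end

theory Submission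
  imports Defs
begin

text \<open>Since \<open>R\<close> is discrete, the nonzero entries of such a frieze have norm at least some
  \<open>\<delta> > 0\<close>, and only finitely many points of \<open>R\<close> have bounded norm. Without zero entries, the
  unimodular rule determines a frieze from its row \<open>0\<close>, so it suffices to bound the entries
  \<open>c (0, j)\<close>. Every entry is expressed through row \<open>0\<close> by
  \<open>c (k, l) = c (0, k) c (0, l) (\<Sum>i\<in>{k..<l}. 1 / (c (0, i) c (0, i + 1)))\<close>.
  If row \<open>0\<close> had a large entry, a scale gap \<open>(t, q t]\<close> with \<open>q > (n + 1) / \<delta>\<close> would separate
  it from its nearest small neighbours \<open>c (0, k)\<close>, \<open>c (0, l)\<close>; then each summand above has norm
  at most \<open>1 / q\<close>, so \<open>norm (c (k, l)) < \<delta>\<close>, although \<open>c (k, l)\<close> is a nonzero element of \<open>R\<close>.\<close>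

lemma pigeonhole_disjoint_family:
  assumes "finite I" "card I < N" "disjoint_family_on A {..<N}"
  shows "\<exists>r<N. \<forall>i\<in>I. f i \<notin> A r"
proof (rule ccontr)
  assume "\<not> ?thesis"
  then obtain g where g: "\<And>r. r < N \<Longrightarrow> g r \<in> I \<and> f (g r) \<in> A r" by metis
  have "inj_on g {..<N}"
  proof (rule inj_onI)
    fix r r' assume r: "r \<in> {..<N}" "r' \<in> {..<N}" and "g r = g r'"
    then have "f (g r) \<in> A r \<inter> A r'" using g[of r] g[of r'] r by auto
    then show "r = r'" using assms(3) r unfolding disjoint_family_on_def by blast
  qed
  then have "card {..<N} \<le> card I"
    using g assms(1) by (intro card_inj_on_le) auto
  then show False using assms(2) by simp
qed

lemma disjoint_family_power_shells:
  fixes q :: real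
  assumes "1 \<le> q"
  shows "disjoint_family (\<lambda>r. {t. q ^ r < t \<and> t \<le> q ^ Suc r})"
proof -
  have *: "{t. q ^ r < t \<and> t \<le> q ^ Suc r} \<inter> {t. q ^ r' < t \<and> t \<le> q ^ Suc r'} = {}"
    if "r < r'" for r r'
    using power_increasing[of "Suc r" r' q] that assms by auto
  show ?thesis
    unfolding disjoint_family_on_def
  proof (intro ballI impI)
    fix r r' :: nat assume "r \<noteq> r'"
    then consider "r < r'" | "r' < r" by linarith
    then show "{t. q ^ r < t \<and> t \<le> q ^ Suc r} \<inter> {t. q ^ r' < t \<and> t \<le> q ^ Suc r'} = {}"
      using * by cases blast+
  qed
qed

lemma gap_product_le:
  fixes a :: "int \<Rightarrow> real"
  assumes "k + 1 < l" "1 \<le> q" "0 \<le> a k" "a k \<le> t" "0 \<le> a l" "a l \<le> t"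
    and inner: "\<And>i. k < i \<Longrightarrow> i < l \<Longrightarrow> q * t < a i"
    and i: "k \<le> i" "i < l"
  shows "a k * a l * q \<le> a i * a (i + 1)"
proof -
  have t: "0 \<le> t" using assms(3,4) by linarith
  consider "i = k" | "i + 1 = l" | "k < i" "i + 1 < l" using i assms(1) by linarith
  then show ?thesis
  proof cases
    case 1
    have "a k * a l * q \<le> a k * (q * t)"
      using mult_left_mono[OF mult_left_mono[OF assms(6), of q], of "a k"] assms(2,3)
      by (simp add: mult_ac)
    also have "\<dots> \<le> a k * a (k + 1)"
      using inner[of "k + 1"] assms(1,3) by (simp add: mult_left_mono)
    finally show ?thesis using 1 by simp
  next
    case 2
    have "a k * a l * q \<le> (q * t) * a l"
      using mult_right_mono[OF mult_left_mono[OF assms(4), of q], of "a l"] assms(2,5)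
      by (simp add: mult_ac)
    also have "\<dots> \<le> a i * a l"
      using inner[of i] 2 assms(1,5) by (simp add: mult_right_mono)
    finally show ?thesis using 2 by simp
  next
    case 3
    have "a k * a l * q \<le> (t * t) * q"
      using assms t by (intro mult_right_mono mult_mono) auto
    also have "\<dots> \<le> (q * t) * (q * t)"
      using assms(2) t mult_left_mono[of 1 q "t * t * q"] by (simp add: mult_ac)
    also have "\<dots> \<le> a i * a (i + 1)"
    proof -
      have "0 \<le> q * t" using assms(2) t by simp
      then show ?thesis using inner[of i] inner[of "i + 1"] 3 by (intro mult_mono) auto
    qed
    finally show ?thesis .
  qed
qed

locale nonzero_frieze =
  fixes n :: nat and S :: "complex set" and c :: "int \<times> int \<Rightarrow> complex"
  assumes frieze: "frieze_pattern n S c" and zero_notin: "0 \<notin> S"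
begin

lemma entry_same: "c (i, i) = 0"
  using frieze unfolding frieze_pattern_def by blast

lemma entry_next: "c (i, i + 1) = 1"
  using frieze unfolding frieze_pattern_def by blast

lemma entry_last: "c (i, i + int n + 3) = 0"
  using frieze unfolding frieze_pattern_def by blast

lemma entry_before_last: "c (i, i + int n + 2) = 1"
  using frieze unfolding frieze_pattern_def by blast

lemma entry_mem: "i + 2 \<le> j \<Longrightarrow> j \<le> i + int n + 1 \<Longrightarrow> c (i, j) \<in> S"
  using frieze unfolding frieze_pattern_def by blast

lemma unimodular:
  "i + 1 \<le> j \<Longrightarrow> j \<le> i + int n + 2 \<Longrightarrow> c (i, j) * c (i + 1, j + 1) - c (i, j + 1) * c (i + 1, j) = 1"
  using frieze unfolding frieze_pattern_def by blast

lemma entry_nonzero: "i + 1 \<le> j \<Longrightarrow> j \<le> i + int n + 2 \<Longrightarrow> c (i, j) \<noteq> 0"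
proof -
  assume "i + 1 \<le> j" "j \<le> i + int n + 2"
  then consider "j = i + 1" | "j = i + int n + 2" | "i + 2 \<le> j" "j \<le> i + int n + 1"
    by linarith
  then show ?thesis
    using entry_next[of i] entry_before_last[of i] entry_mem[of i j] zero_notin by cases auto
qed

lemma row_zero_mem: "0 \<le> j \<Longrightarrow> j \<le> int n + 3 \<Longrightarrow> c (0, j) \<in> insert 0 (insert 1 S)"
proof -
  assume "0 \<le> j" "j \<le> int n + 3"
  then consider "j = 0" | "j = 1" | "j = int n + 2" | "j = int n + 3" | "2 \<le> j" "j \<le> int n + 1"
    by linarith
  then show ?thesis
    using entry_same[of 0] entry_next[of 0] entry_before_last[of 0] entry_last[of 0] entry_mem[of 0 j]
    by cases auto
qed

lemma entry_recurrence:
  assumes "j - int n - 2 \<le> i" "i < j"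
  shows "c (i, j - 1) + c (i, j + 1) = c (j - 1, j + 1) * c (i, j)"
proof -
  have "i \<le> j - 1" using assms(2) by simp
  then have "j - int n - 2 \<le> i \<longrightarrow> c (i, j - 1) + c (i, j + 1) = c (j - 1, j + 1) * c (i, j)"
  proof (induction i rule: int_le_induct)
    case base
    then show ?case using entry_same[of "j - 1"] entry_next[of "j - 1"] by simp
  next
    case (step i)
    let ?a = "c (j - 1, j + 1)"
    show ?case
    proof
      assume i: "j - int n - 2 \<le> i - 1"
      have rec: "c (i, j - 1) + c (i, j + 1) = ?a * c (i, j)" using step i by simp
      have det1: "c (i - 1, j - 1) * c (i, j) - c (i - 1, j) * c (i, j - 1) = 1"
        using unimodular[of "i - 1" "j - 1"] step.hyps i by simp
      have det2: "c (i - 1, j) * c (i, j + 1) - c (i - 1, j + 1) * c (i, j) = 1"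
        using unimodular[of "i - 1" j] step.hyps i by simp
      have "c (i, j) * (c (i - 1, j - 1) + c (i - 1, j + 1))
          = c (i - 1, j) * (c (i, j - 1) + c (i, j + 1))"
        using det1 det2 by (simp add: algebra_simps)
      also have "\<dots> = c (i, j) * (?a * c (i - 1, j))"
        using rec by simp
      finally show "c (i - 1, j - 1) + c (i - 1, j + 1) = ?a * c (i - 1, j)"
        using entry_nonzero[of i j] step.hyps i by simp
    qed
  qed
  then show ?thesis using assms(1) by blast
qed

lemma row_zero_exchange:
  assumes "1 \<le> k" "k \<le> l" "l \<le> int n + 2"
  shows "c (k, l + 1) * c (0, l) - c (k, l) * c (0, l + 1) = c (0, k)"
  using assms(2,3)
proof (induction l rule: int_ge_induct)
  case base
  then show ?case using entry_same[of k] entry_next[of k] by simp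
next
  case (step l)
  let ?a = "c (l, l + 2)"
  have rec_k: "c (k, l) + c (k, l + 2) = ?a * c (k, l + 1)"
    using entry_recurrence[of "l + 1" k] step assms(1) by (simp add: algebra_simps)
  have rec_0: "c (0, l) + c (0, l + 2) = ?a * c (0, l + 1)"
    using entry_recurrence[of "l + 1" 0] step assms(1) by (simp add: algebra_simps)
  have "c (k, l + 2) * c (0, l + 1) - c (k, l + 1) * c (0, l + 2)
      = c (k, l + 1) * c (0, l) - c (k, l) * c (0, l + 1)"
  proof -
    have "c (k, l + 2) = ?a * c (k, l + 1) - c (k, l)" "c (0, l + 2) = ?a * c (0, l + 1) - c (0, l)"
      using rec_k rec_0 by (simp_all add: eq_diff_eq add.commute)
    then show ?thesis by (simp only:) (simp add: algebra_simps)
  qed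
  then show ?case using step by (simp add: add.assoc)
qed

text \<open>Dividing the exchange relation by \<open>c (0, l) * c (0, l + 1)\<close> makes
  \<open>c (k, l) / c (0, l)\<close> telescope.\<close>
lemma entry_eq_row_zero_sum:
  assumes "1 \<le> k" "k \<le> l" "l \<le> int n + 2"
  shows "c (k, l) = c (0, k) * c (0, l) * (\<Sum>i\<in>{k..<l}. 1 / (c (0, i) * c (0, i + 1)))"
  using assms(2,3)
proof (induction l rule: int_ge_induct)
  case base
  then show ?case using entry_same[of k] by simp
next
  case (step l)
  let ?x = "\<lambda>i. c (0, i)"
  have nonzero: "?x l \<noteq> 0" "?x (l + 1) \<noteq> 0"
    using entry_nonzero[of 0 l] entry_nonzero[of 0 "l + 1"] step assms(1) by auto
  have "c (k, l + 1) * ?x l - c (k, l) * ?x (l + 1) = ?x k"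
    using row_zero_exchange[of k l] step assms(1) by simp
  then have "c (k, l + 1) = (?x k + c (k, l) * ?x (l + 1)) / ?x l"
    using nonzero by (simp add: field_simps)
  also have "\<dots> = ?x k * ?x (l + 1) * (1 / (?x l * ?x (l + 1)) + (\<Sum>i\<in>{k..<l}. 1 / (?x i * ?x (i + 1))))"
    using step nonzero by (simp add: field_simps)
  also have "\<dots> = ?x k * ?x (l + 1) * (\<Sum>i\<in>{k..<l + 1}. 1 / (?x i * ?x (i + 1)))"
  proof -
    have "{k..<l + 1} = insert l {k..<l}" using \<open>k \<le> l\<close> by auto
    then show ?thesis by (simp add: distrib_left)
  qed
  finally show ?case .
qed

lemma norm_entry_le_gap:
  fixes q t :: real
  assumes kl: "1 \<le> k" "k + 1 < l" "l \<le> int n + 2" and q: "1 \<le> q"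
    and ends: "norm (c (0, k)) \<le> t" "norm (c (0, l)) \<le> t"
    and inner: "\<And>i. k < i \<Longrightarrow> i < l \<Longrightarrow> q * t < norm (c (0, i))"
  shows "norm (c (k, l)) \<le> of_int (l - k) / q"
proof -
  let ?x = "\<lambda>i. c (0, i)"
  have ratio_le: "norm (?x k * ?x l / (?x i * ?x (i + 1))) \<le> 1 / q" if i: "k \<le> i" "i < l" for i
  proof -
    have "norm (?x k) * norm (?x l) * q \<le> norm (?x i) * norm (?x (i + 1))"
      using gap_product_le[of k l q "\<lambda>i. norm (?x i)" t i] kl q ends inner i by simp
    moreover have "?x i \<noteq> 0" "?x (i + 1) \<noteq> 0"
      using entry_nonzero[of 0 i] entry_nonzero[of 0 "i + 1"] i kl by auto
    ultimately show ?thesis using q by (simp add: norm_divide norm_mult field_simps)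
  qed
  have "c (k, l) = (\<Sum>i\<in>{k..<l}. ?x k * ?x l / (?x i * ?x (i + 1)))"
    using entry_eq_row_zero_sum[of k l] kl by (simp add: sum_distrib_left)
  also have "norm \<dots> \<le> (\<Sum>i\<in>{k..<l}. norm (?x k * ?x l / (?x i * ?x (i + 1))))"
    by (rule norm_sum)
  also have "\<dots> \<le> of_nat (card {k..<l}) * (1 / q)"
    using ratio_le by (intro sum_bounded_above) auto
  also have "\<dots> = of_int (l - k) / q"
    using kl by simp
  finally show ?thesis .
qed

text \<open>An entry above the gap lies between two nearest entries \<open>c (0, k)\<close>, \<open>c (0, l)\<close> below it,
  and then \<open>c (k, l) \<in> S\<close> is too small.\<close>
lemma row_zero_below_gap:
  fixes q t \<delta> :: real
  assumes S: "\<forall>s\<in>S. \<delta> \<le> norm s" and q: "1 \<le> q" "real n + 1 < \<delta> * q" and t: "1 \<le> t"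
    and gap: "\<And>i. 2 \<le> i \<Longrightarrow> i \<le> int n + 1 \<Longrightarrow> norm (c (0, i)) \<le> t \<or> q * t < norm (c (0, i))"
    and j: "1 \<le> j" "j \<le> int n + 2"
  shows "norm (c (0, j)) \<le> t"
proof (rule ccontr)
  let ?x = "\<lambda>i. c (0, i)"
  assume big: "\<not> norm (?x j) \<le> t"
  define K where "K = {i \<in> {1..j}. norm (?x i) \<le> t}"
  define L where "L = {i \<in> {j..int n + 2}. norm (?x i) \<le> t}"
  have "1 \<in> K" "int n + 2 \<in> L"
    using j t entry_next[of 0] entry_before_last[of 0] by (simp_all add: K_def L_def)
  moreover have "finite K" "finite L"
    unfolding K_def L_def by (rule finite_subset[OF _ finite_atLeastAtMost_int], blast)+
  ultimately have "Max K \<in> K" "Min L \<in> L" by (auto intro: Max_in Min_in)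
  define k where "k = Max K"
  define l where "l = Min L"
  have k: "1 \<le> k" "k < j" "norm (?x k) \<le> t"
    using \<open>Max K \<in> K\<close> big unfolding k_def K_def by (auto simp: order.order_iff_strict)
  have l: "j < l" "l \<le> int n + 2" "norm (?x l) \<le> t"
    using \<open>Min L \<in> L\<close> big unfolding l_def L_def by (auto simp: order.order_iff_strict)
  have inner: "q * t < norm (?x i)" if "k < i" "i < l" for i
  proof -
    have "i \<notin> K" using that \<open>finite K\<close> unfolding k_def by (meson Max_ge not_le)
    moreover have "i \<notin> L" using that \<open>finite L\<close> unfolding l_def by (meson Min_le not_le)
    ultimately have "\<not> norm (?x i) \<le> t" using that k l unfolding K_def L_def by auto
    then show ?thesis using gap[of i] that k l by linarith
  qed
  have "\<delta> \<le> norm (c (k, l))" using S entry_mem[of k l] k l by simp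
  also have "\<dots> \<le> of_int (l - k) / q"
    using norm_entry_le_gap[of k l q t] k l q inner by simp
  also have "\<dots> \<le> (real n + 1) / q"
    using k l q by (intro divide_right_mono) auto
  finally show False using q by (simp add: field_simps)
qed

text \<open>By pigeonhole, one of the \<open>n + 1\<close> shells \<open>(q ^ r, q ^ Suc r]\<close>, \<open>r \<le> n\<close>, contains none
  of the \<open>n\<close> free entries of row \<open>0\<close>, which provides the gap.\<close>
lemma norm_row_zero_le:
  fixes \<delta> :: real
  assumes "0 < \<delta>" "\<forall>s\<in>S. \<delta> \<le> norm s" "0 \<le> j" "j \<le> int n + 3"
  shows "norm (c (0, j)) \<le> (1 + (real n + 1) / \<delta>) ^ n"
proof -
  define q where "q = 1 + (real n + 1) / \<delta>"
  have q: "1 \<le> q" "real n + 1 < \<delta> * q"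
    using assms(1) by (simp_all add: q_def field_simps)
  have "disjoint_family_on (\<lambda>r. {t. q ^ r < t \<and> t \<le> q ^ Suc r}) {..<n + 1}"
    using disjoint_family_on_mono[OF subset_UNIV disjoint_family_power_shells[OF q(1)]] .
  then have "\<exists>r<n + 1. \<forall>i\<in>{2..int n + 1}. norm (c (0, i)) \<notin> {t. q ^ r < t \<and> t \<le> q ^ Suc r}"
    by (intro pigeonhole_disjoint_family) auto
  then obtain r where r: "r < n + 1"
    and shell: "\<forall>i\<in>{2..int n + 1}. norm (c (0, i)) \<notin> {t. q ^ r < t \<and> t \<le> q ^ Suc r}"
    by blast
  have "1 \<le> q ^ r" using q(1) by simp
  have gap: "norm (c (0, i)) \<le> q ^ r \<or> q * q ^ r < norm (c (0, i))"
    if "2 \<le> i" "i \<le> int n + 1" for i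
  proof -
    have "\<not> (q ^ r < norm (c (0, i)) \<and> norm (c (0, i)) \<le> q ^ Suc r)" using shell that by simp
    then show ?thesis by auto
  qed
  have below: "norm (c (0, i)) \<le> q ^ r" if "1 \<le> i" "i \<le> int n + 2" for i
    using row_zero_below_gap[OF assms(2) q \<open>1 \<le> q ^ r\<close> gap that] .
  have "q ^ r \<le> q ^ n" using q(1) r by (simp add: power_increasing)
  consider "j = 0 \<or> j = int n + 3" | "1 \<le> j" "j \<le> int n + 2"
    using assms(3,4) by linarith
  then have "norm (c (0, j)) \<le> q ^ n"
  proof cases
    case 1
    then show ?thesis using entry_same[of 0] entry_last[of 0] q(1) by auto
  next
    case 2
    then show ?thesis using below[OF 2] \<open>q ^ r \<le> q ^ n\<close> by linarith
  qed
  then show ?thesis by (simp add: q_def)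
qed

end

lemma next_row_eq:
  assumes "nonzero_frieze n S c" "nonzero_frieze n S' c'"
    and row: "\<forall>j\<in>{i..i + int n + 3}. c (i, j) = c' (i, j)"
  shows "\<forall>j\<in>{i + 1..i + 1 + int n + 3}. c (i + 1, j) = c' (i + 1, j)"
proof
  interpret C: nonzero_frieze n S c by fact
  interpret C': nonzero_frieze n S' c' by fact
  fix j assume "j \<in> {i + 1..i + 1 + int n + 3}"
  then have "i + 1 \<le> j" "j \<le> i + 1 + int n + 3" by auto
  then show "c (i + 1, j) = c' (i + 1, j)"
  proof (induction j rule: int_ge_induct)
    case base
    then show ?case using C.entry_same C'.entry_same by simp
  next
    case (step j)
    show ?case
    proof (cases "j + 1 = i + 1 + int n + 3")
      case True
      then show ?thesis using C.entry_last[of "i + 1"] C'.entry_last[of "i + 1"] by simp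
    next
      case False
      then have j: "i + 1 \<le> j" "j \<le> i + int n + 2" using step by auto
      have "c (i, j) * c (i + 1, j + 1) = 1 + c (i, j + 1) * c (i + 1, j)"
        using C.unimodular[OF j] by (simp add: algebra_simps)
      moreover have "c' (i, j) * c' (i + 1, j + 1) = 1 + c' (i, j + 1) * c' (i + 1, j)"
        using C'.unimodular[OF j] by (simp add: algebra_simps)
      moreover have "c (i, j) = c' (i, j)" "c (i, j + 1) = c' (i, j + 1)" using row j by auto
      moreover have "c (i + 1, j) = c' (i + 1, j)" using step j by simp
      ultimately show ?thesis using C.entry_nonzero[OF j] by (metis mult_left_cancel)
    qed
  qed
qed

lemma prev_row_eq:
  assumes "nonzero_frieze n S c" "nonzero_frieze n S' c'"
    and row: "\<forall>j\<in>{i + 1..i + 1 + int n + 3}. c (i + 1, j) = c' (i + 1, j)"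
  shows "\<forall>j\<in>{i..i + int n + 3}. c (i, j) = c' (i, j)"
proof
  interpret C: nonzero_frieze n S c by fact
  interpret C': nonzero_frieze n S' c' by fact
  fix j assume "j \<in> {i..i + int n + 3}"
  then have "j \<le> i + int n + 3" "i \<le> j" by auto
  then show "c (i, j) = c' (i, j)"
  proof (induction j rule: int_le_induct)
    case base
    then show ?case using C.entry_last C'.entry_last by simp
  next
    case (step j)
    show ?case
    proof (cases "j - 1 = i")
      case True
      then show ?thesis using C.entry_same C'.entry_same by simp
    next
      case False
      then have j: "i + 1 \<le> j - 1" "j - 1 \<le> i + int n + 2" using step by auto
      have "c (i, j - 1) * c (i + 1, j) = 1 + c (i, j) * c (i + 1, j - 1)"
        using C.unimodular[OF j] by (simp add: algebra_simps)
      moreover have "c' (i, j - 1) * c' (i + 1, j) = 1 + c' (i, j) * c' (i + 1, j - 1)"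
        using C'.unimodular[OF j] by (simp add: algebra_simps)
      moreover have "c (i + 1, j) = c' (i + 1, j)" "c (i + 1, j - 1) = c' (i + 1, j - 1)"
        using row j by auto
      moreover have "c (i, j) = c' (i, j)" using step j by simp
      moreover have "c (i + 1, j) \<noteq> 0" using C.entry_nonzero[of "i + 1" j] j by simp
      ultimately show ?thesis by (metis mult_right_cancel)
    qed
  qed
qed

lemma nonzero_frieze_eqI:
  assumes C: "nonzero_frieze n S c" and C': "nonzero_frieze n S' c'"
    and row: "\<forall>j\<in>{0..int n + 3}. c (0, j) = c' (0, j)"
  shows "c = c'"
proof
  fix p :: "int \<times> int"
  obtain i j where p: "p = (i, j)" by fastforce
  have "\<forall>j\<in>{i..i + int n + 3}. c (i, j) = c' (i, j)"
  proof (induction i rule: int_induct[where k = 0])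
    case base
    then show ?case using row by simp
  next
    case (step1 i)
    then show ?case using next_row_eq[OF C C'] by blast
  next
    case (step2 i)
    then show ?case using prev_row_eq[OF C C', of "i - 1"] by simp
  qed
  moreover have "c \<in> extensional (frieze_dom n)" "c' \<in> extensional (frieze_dom n)"
    using C C' unfolding nonzero_frieze_def frieze_pattern_def by blast+
  ultimately show "c p = c' p"
    unfolding p frieze_dom_def extensional_def by (cases "i \<le> j \<and> j \<le> i + int n + 3") auto
qed

lemma finite_friezes_with_row_zero_in:
  assumes "finite A" "0 \<notin> S"
    and row: "\<And>c j. frieze_pattern n S c \<Longrightarrow> 0 \<le> j \<Longrightarrow> j \<le> int n + 3 \<Longrightarrow> c (0, j) \<in> A"
  shows "finite {c. frieze_pattern n S c}"
proof -
  let ?X = "{c. frieze_pattern n S c}"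
  let ?row = "\<lambda>c. \<lambda>j\<in>{0..int n + 3}. c (0, j)"
  have "inj_on ?row ?X"
  proof (rule inj_onI)
    fix c c' assume c: "c \<in> ?X" and c': "c' \<in> ?X" and eq: "?row c = ?row c'"
    have "nonzero_frieze n S c" "nonzero_frieze n S c'"
      using c c' assms(2) by (simp_all add: nonzero_frieze_def)
    moreover have "\<forall>j\<in>{0..int n + 3}. c (0, j) = c' (0, j)"
      using eq by (metis restrict_apply')
    ultimately show "c = c'" by (rule nonzero_frieze_eqI)
  qed
  moreover have "?row ` ?X \<subseteq> (\<Pi>\<^sub>E j\<in>{0..int n + 3}. A)" using row by auto
  moreover have "finite (\<Pi>\<^sub>E j\<in>{0..int n + 3}. A)" using assms(1) by (simp add: finite_PiE)
  ultimately show ?thesis by (meson finite_imageD finite_subset)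
qed

theorem corollary3p8:
  fixes R :: "complex set" and n :: nat
  assumes "\<forall>z. \<not> (z islimpt R)"
  shows "finite {c. frieze_pattern n (R - {0}) c}"
proof -
  have "\<not> 0 islimpt R" using assms by blast
  then obtain \<delta> where "0 < \<delta>" and "\<forall>s\<in>R. s \<noteq> 0 \<longrightarrow> \<not> dist s 0 < \<delta>"
    unfolding islimpt_approachable by blast
  then have \<delta>: "0 < \<delta>" "\<forall>s\<in>R - {0}. \<delta> \<le> norm s" by (auto simp: not_less)
  define B where "B = (1 + (real n + 1) / \<delta>) ^ n"
  define A where "A = insert 0 (insert 1 (cball 0 B \<inter> R))"
  have "finite A"
    unfolding A_def using assms by (simp add: finite_not_islimpt_in_compact)
  moreover have "c (0, j) \<in> A"
    if "frieze_pattern n (R - {0}) c" "0 \<le> j" "j \<le> int n + 3" for c j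
  proof -
    interpret nonzero_frieze n "R - {0}" c
      using that(1) by unfold_locales simp_all
    have "norm (c (0, j)) \<le> B" unfolding B_def by (rule norm_row_zero_le[OF \<delta> that(2,3)])
    then show ?thesis
      using row_zero_mem[OF that(2,3)] unfolding A_def by (auto simp: dist_norm)
  qed
  ultimately show ?thesis by (intro finite_friezes_with_row_zero_in[where A = A]) auto
qed

end
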